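(* Let $G$ be a $*$-graph in which every vertex has valency $4$ or $6$, and let $G'$ be an expansion of $G$. If $G'$ contains a Vassiliev obstruct, then $G$ contains a Vassiliev obstruct.
   Context: Graphs are finite and may have loops and multiple edges; each edge consists of two half-edges. A $*$-graph is a graph together with, for each vertex $a$ of valency $n$, an unoriented cyclic order $X_a$ of the half-edges at $a$, i.e. a bijection $X_a$ from the half-edges at $a$ to the vertices of the cycle graph $C_n$ (a cyclic order up to rotation and reversal). An $X$-graph is a $4$-regular graph with, at each vertex, a partition of its half-edges into two pairs of opposite half-edges; this is the same as a $*$-structure at each $4$-valent vertex (opposite = non-adjacent in the cyclic order). Expansion of a $6$-valent vertex $v$: label its half-edges $h_1,\dots,h_6$ so that $X_v$ is the cyclic order $(h_1,\dots,h_6)$; replace $v$ by a triangle on new vertices $p_1,p_2,p_3$, attach $h_1,h_2$ to $p_1$, $h_3,h_4$ to $p_2$, $h_5,h_6$ to $p_3$, with $X$-structures: at $p_1$, $h_1$ opposite the half-edge of $p_1p_2$ and $h_2$ opposite that of $p_1p_3$; at $p_2$, $h_3$ opposite that of $p_2p_3$ and $h_4$ opposite that of $p_2p_1$; at $p_3$, $h_5$ opposite that of $p_3p_1$ and $h_6$ opposite that of $p_3p_2$. An expansion of $G$ replaces every $6$-valent vertex in this way (choices of labeling made independently), the $4$-valent vertices keeping their structure. A cycle is a closed walk using no edge more than once (vertices may repeat). For edge-disjoint cycles $A,B$, a crossing is an occurrence of a common vertex $a$ where $A$ passes via half-edges $A_1,A_2$ and $B$ via $B_1,B_2$ with $X_a(A_1),X_a(B_1),X_a(A_2),X_a(B_2)$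 alternating in $C_n$ (for a $4$-valent vertex: each cycle passes straight through via a pair of opposite half-edges); crossings are counted with multiplicity over all such pairs of passages. A Vassiliev obstruct is a pair of edge-disjoint cycles with exactly one crossing. *)

theory Defs
  imports Main
begin

text \<open>A graph (loops and multiple edges allowed) given by half-edges:
  each half-edge h is attached to the vertex vert h; the edge containing h
  consists of h and its partner opp h (a fixed-point-free involution).
  The star-structure is a map cyc which, at each vertex a of valency n,
  is a bijection from the half-edges at a onto the vertices 0..n-1 of the
  cycle graph C_n (cyclic order i, i+1 mod n).  Rotations/reversals of cyc
  give the same star-structure; all notions below are invariant under them.\<close>

record ('v, 'h) sgraph =
  verts  :: "'v set"
  hedges :: "'h set"
  vert   :: "'h \<Rightarrow> 'v"
  opp    :: "'h \<Rightarrow> 'h"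
  cyc    :: "'h \<Rightarrow> nat"

definition halfedges_at :: "('v, 'h) sgraph \<Rightarrow> 'v \<Rightarrow> 'h set" where
  "halfedges_at G a = {h \<in> hedges G. vert G h = a}"

definition valency :: "('v, 'h) sgraph \<Rightarrow> 'v \<Rightarrow> nat" where
  "valency G a = card (halfedges_at G a)"

definition star_graph :: "('v, 'h) sgraph \<Rightarrow> bool" where
  "star_graph G \<longleftrightarrow> finite (verts G) \<and> finite (hedges G) \<and>
     (\<forall>h \<in> hedges G. vert G h \<in> verts G \<and> opp G h \<in> hedges G \<and>
        opp G h \<noteq> h \<and> opp G (opp G h) = h) \<and>
     (\<forall>a \<in> verts G. bij_betw (cyc G) (halfedges_at G a) {0..<valency G a})"

text \<open>Cyclic (clockwise) distance from position a to position b in C_n, and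
  the alternation of four positions a,b,c,d in C_n: they are distinct and
  b, d lie on different arcs of C_n between a and c.\<close>

definition cdist :: "nat \<Rightarrow> nat \<Rightarrow> nat \<Rightarrow> nat" where
  "cdist n a b = (b + n - a) mod n"

definition alternating :: "nat \<Rightarrow> nat \<Rightarrow> nat \<Rightarrow> nat \<Rightarrow> nat \<Rightarrow> bool" where
  "alternating n a b c d \<longleftrightarrow> distinct [a, b, c, d] \<and>
     ((cdist n a b < cdist n a c) \<noteq> (cdist n a d < cdist n a c))"

text \<open>A cycle (closed walk using no edge twice) is a nonempty list of
  half-edges hs: the i-th step traverses the edge from hs!i to opp (hs!i),
  arriving at the vertex of hs!((i+1) mod length hs).\<close>

definition is_cycle :: "('v, 'h) sgraph \<Rightarrow> 'h list \<Rightarrow> bool" where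
  "is_cycle G hs \<longleftrightarrow> hs \<noteq> [] \<and> set hs \<subseteq> hedges G \<and>
     distinct (hs @ map (opp G) hs) \<and>
     (\<forall>i < length hs. vert G (opp G (hs ! i)) = vert G (hs ! ((i + 1) mod length hs)))"

definition edges_of :: "('v, 'h) sgraph \<Rightarrow> 'h list \<Rightarrow> 'h set" where
  "edges_of G hs = set (hs @ map (opp G) hs)"

definition edge_disjoint :: "('v, 'h) sgraph \<Rightarrow> 'h list \<Rightarrow> 'h list \<Rightarrow> bool" where
  "edge_disjoint G A B \<longleftrightarrow> edges_of G A \<inter> edges_of G B = {}"

text \<open>The i-th passage of a cycle hs goes through the vertex of
  pass_out hs i via the half-edges pass_in hs i and pass_out hs i.\<close>

definition pass_in :: "('v, 'h) sgraph \<Rightarrow> 'h list \<Rightarrow> nat \<Rightarrow> 'h" where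
  "pass_in G hs i = opp G (hs ! i)"

definition pass_out :: "'h list \<Rightarrow> nat \<Rightarrow> 'h" where
  "pass_out hs i = hs ! ((i + 1) mod length hs)"

definition crossings :: "('v, 'h) sgraph \<Rightarrow> 'h list \<Rightarrow> 'h list \<Rightarrow> nat" where
  "crossings G A B = card {(i, j). i < length A \<and> j < length B \<and>
      vert G (pass_out A i) = vert G (pass_out B j) \<and>
      alternating (valency G (vert G (pass_out A i)))
        (cyc G (pass_in G A i)) (cyc G (pass_in G B j))
        (cyc G (pass_out A i)) (cyc G (pass_out B j))}"

definition has_vassiliev_obstruct :: "('v, 'h) sgraph \<Rightarrow> bool" where
  "has_vassiliev_obstruct G \<longleftrightarrow> (\<exists>A B. is_cycle G A \<and> is_cycle G B \<and>
      edge_disjoint G A B \<and> crossings G A B = 1)"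

text \<open>Expansion.  lab v i (i = 0..5) is the half-edge h_(i+1) at a 6-valent
  vertex v; the labelling must list the half-edges at v in the cyclic order
  given by cyc (up to rotation and reversal).  In the expansion, an old
  4-valent vertex a becomes (a,0); a 6-valent vertex v is replaced by the
  triangle on p_k = (v,k), k = 1,2,3; the new half-edge Inr (v,k,j) is the
  end at p_k of the triangle edge p_k p_j.\<close>

definition lab_ok :: "('v, 'h) sgraph \<Rightarrow> ('v \<Rightarrow> nat \<Rightarrow> 'h) \<Rightarrow> bool" where
  "lab_ok G lab \<longleftrightarrow> (\<forall>v \<in> verts G. valency G v = 6 \<longrightarrow>
      bij_betw (lab v) {0..<6} (halfedges_at G v) \<and>
      (\<exists>r < 6. (\<forall>i < 6. cyc G (lab v i) = (r + i) mod 6) \<or>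
               (\<forall>i < 6. cyc G (lab v i) = (r + 6 - i) mod 6)))"

definition lab_idx :: "('v, 'h) sgraph \<Rightarrow> ('v \<Rightarrow> nat \<Rightarrow> 'h) \<Rightarrow> 'h \<Rightarrow> nat" where
  "lab_idx G lab h = (THE i. i < 6 \<and> lab (vert G h) i = h)"

definition expand :: "('v, 'h) sgraph \<Rightarrow> ('v \<Rightarrow> nat \<Rightarrow> 'h) \<Rightarrow>
    ('v \<times> nat, 'h + 'v \<times> nat \<times> nat) sgraph" where
  "expand G lab = \<lparr>
     verts = {(a, 0) | a. a \<in> verts G \<and> valency G a = 4} \<union>
             {(v, k) | v k. v \<in> verts G \<and> valency G v = 6 \<and> k \<in> {1, 2, 3}},
     hedges = Inl ` hedges G \<union>
             {Inr (v, k, j) | v k j. v \<in> verts G \<and> valency G v = 6 \<and>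
                 k \<in> {1, 2, 3} \<and> j \<in> {1, 2, 3} \<and> k \<noteq> j},
     vert = (\<lambda>x. case x of
               Inl h \<Rightarrow> (if valency G (vert G h) = 6
                         then (vert G h, lab_idx G lab h div 2 + 1)
                         else (vert G h, 0))
             | Inr (v, k, j) \<Rightarrow> (v, k)),
     opp = (\<lambda>x. case x of
               Inl h \<Rightarrow> Inl (opp G h)
             | Inr (v, k, j) \<Rightarrow> Inr (v, j, k)),
     cyc = (\<lambda>x. case x of
               Inl h \<Rightarrow> (if valency G (vert G h) = 6
                         then lab_idx G lab h mod 2
                         else cyc G h)
             | Inr (v, k, j) \<Rightarrow> (if j = k mod 3 + 1 then 2 else 3))
   \<rparr>"

definition is_expansion :: "('v, 'h) sgraph \<Rightarrow>
    ('v \<times> nat, 'h + 'v \<times> nat \<times> nat) sgraph \<Rightarrow> bool" where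
  "is_expansion G G' \<longleftrightarrow> (\<exists>lab. lab_ok G lab \<and> G' = expand G lab)"

end

theory Submission
  imports Defs
begin

text \<open>A cycle of the expansion that uses an old half-edge splits into segments: each enters
  the triangle of a 6-valent vertex (or an old 4-valent vertex) through an old half-edge, runs
  along triangle edges and leaves through an old half-edge.  Contracting the triangles turns the
  cycle into a cycle of G in which every segment becomes a single passage.  Cycles inside the
  triangles cross nothing, since at each corner the two triangle half-edges are adjacent in the
  cyclic order.  For two edge-disjoint segments through the same 6-valent vertex, a finite check
  over all labels and all triangle trails shows that they cross an odd number of times exactly
  when their projected passages cross in G.  So if the expansion has exactly one crossing, exactly
  one pair of projected passages crosses, and the projected cycles are an obstruct of G.\<close>

section \<open>The expanded triangle of a 6-valent vertex\<close>

text \<open>Local model of the half-edges at the triangle: Old i is the old half-edge with label i,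
  attached to the corner i div 2 + 1, and Tri k j is the end at corner k of the triangle edge
  from k to j; corner_pos gives the position in the cyclic order at the corner, as in expand.\<close>

datatype corner_hedge = Old nat | Tri nat nat

fun corner :: "corner_hedge \<Rightarrow> nat" where
  "corner (Old i) = i div 2 + 1"
| "corner (Tri k j) = k"

fun corner_pos :: "corner_hedge \<Rightarrow> nat" where
  "corner_pos (Old i) = i mod 2"
| "corner_pos (Tri k j) = (if j = k mod 3 + 1 then 2 else 3)"

definition triangle_darts :: "(nat \<times> nat) list" where
  "triangle_darts = [(1,2), (1,3), (2,1), (2,3), (3,1), (3,2)]"

fun dart_walk :: "nat \<Rightarrow> nat \<Rightarrow> (nat \<times> nat) list \<Rightarrow> bool" where
  "dart_walk k k' [] \<longleftrightarrow> k = k'"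
| "dart_walk k k' ((i, j) # ds) \<longleftrightarrow> i = k \<and> dart_walk j k' ds"

definition triangle_trail :: "nat \<Rightarrow> nat \<Rightarrow> (nat \<times> nat) list \<Rightarrow> bool" where
  "triangle_trail k k' ds \<longleftrightarrow> dart_walk k k' ds \<and> distinct ds \<and> (\<forall>(i, j) \<in> set ds. (j, i) \<notin> set ds)"

definition dart_lists_upto3 :: "(nat \<times> nat) list list" where
  "dart_lists_upto3 = [[]] @ map (\<lambda>d. [d]) triangle_darts
     @ concat (map (\<lambda>d1. map (\<lambda>d2. [d1, d2]) triangle_darts) triangle_darts)
     @ concat (map (\<lambda>d1. concat (map (\<lambda>d2. map (\<lambda>d3. [d1, d2, d3]) triangle_darts) triangle_darts))
                 triangle_darts)"

definition triangle_trails :: "nat \<Rightarrow> nat \<Rightarrow> (nat \<times> nat) list list" where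
  "triangle_trails k k' =
     (if k = k' then
        [[], [(k, k mod 3 + 1), (k mod 3 + 1, (k + 1) mod 3 + 1), ((k + 1) mod 3 + 1, k)],
             [(k, (k + 1) mod 3 + 1), ((k + 1) mod 3 + 1, k mod 3 + 1), (k mod 3 + 1, k)]]
      else [[(k, k')], [(k, 6 - k - k'), (6 - k - k', k')]])"

lemma triangle_trails_by_search:
  "\<forall>k \<in> set [1,2,3]. \<forall>k' \<in> set [1,2,3].
     set (filter (triangle_trail k k') dart_lists_upto3) = set (triangle_trails k k')"
  by code_simp

lemma triangle_trail_length_le_3:
  assumes "set ds \<subseteq> set triangle_darts" "triangle_trail k k' ds"
  shows "length ds \<le> 3"
proof -
  let ?edge = "\<lambda>(i::nat, j::nat). {i, j}"
  have distinct: "distinct ds" and no_reversal: "\<forall>(i, j) \<in> set ds. (j, i) \<notin> set ds"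
    using assms(2) by (auto simp: triangle_trail_def)
  have "inj_on ?edge (set ds)"
  proof (rule inj_onI)
    fix p q assume p: "p \<in> set ds" and q: "q \<in> set ds" and eq: "?edge p = ?edge q"
    obtain i j i' j' where pq: "p = (i, j)" "q = (i', j')" by fastforce
    have "i \<noteq> j" using p assms(1) pq by (auto simp: triangle_darts_def)
    hence "(i, j) = (i', j') \<or> (i, j) = (j', i')" using eq pq by (auto simp: doubleton_eq_iff)
    thus "p = q" using no_reversal p q pq by auto
  qed
  moreover have "?edge ` set ds \<subseteq> {{1,2}, {1,3}, {2,3}}"
    using assms(1) by (auto simp: triangle_darts_def)
  ultimately have "card (set ds) \<le> card {{1::nat,2}, {1,3}, {2,3}}"
    by (metis card_image card_mono finite.emptyI finite.insertI)
  also have "\<dots> \<le> 3" using card_length[of "[{1::nat,2}, {1,3}, {2,3}]"] by simp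
  finally show ?thesis using distinct by (simp add: distinct_card)
qed

lemma in_dart_lists_upto3:
  assumes "set ds \<subseteq> set triangle_darts" "length ds \<le> 3"
  shows "ds \<in> set dart_lists_upto3"
proof -
  have "ds = [] \<or> (\<exists>d1. ds = [d1]) \<or> (\<exists>d1 d2. ds = [d1, d2]) \<or> (\<exists>d1 d2 d3. ds = [d1, d2, d3])"
    using assms(2) by (cases ds; cases "tl ds"; cases "tl (tl ds)"; cases "tl (tl (tl ds))"; auto)
  thus ?thesis
  proof (elim disjE exE)
    fix d1 d2 assume "ds = [d1, d2]"
    hence "ds \<in> set (concat (map (\<lambda>d1. map (\<lambda>d2. [d1, d2]) triangle_darts) triangle_darts))"
      unfolding set_concat set_map using assms(1) by auto
    thus ?thesis unfolding dart_lists_upto3_def set_append Un_iff by blast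
  next
    fix d1 d2 d3 assume "ds = [d1, d2, d3]"
    hence "ds \<in> set (concat (map (\<lambda>d1. concat (map (\<lambda>d2. map (\<lambda>d3. [d1, d2, d3]) triangle_darts)
                  triangle_darts)) triangle_darts))"
      unfolding set_concat set_map using assms(1) by auto
    thus ?thesis unfolding dart_lists_upto3_def set_append Un_iff by blast
  qed (use assms(1) in \<open>auto simp: dart_lists_upto3_def\<close>)
qed

lemma triangle_trail_in_table:
  assumes "set ds \<subseteq> set triangle_darts" "triangle_trail k k' ds" "k \<in> {1,2,3}" "k' \<in> {1,2,3}"
  shows "ds \<in> set (triangle_trails k k')"
proof -
  have "ds \<in> set (filter (triangle_trail k k') dart_lists_upto3)"
    using assms(1,2) in_dart_lists_upto3 triangle_trail_length_le_3 by simp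
  thus ?thesis using triangle_trails_by_search assms(3,4) by auto
qed

text \<open>The passages, as (in, out) pairs of local half-edges, of a walk through the triangle that
  enters by the old half-edge with label a, follows the darts ds and leaves by the old half-edge
  with label b.\<close>

definition local_passages :: "nat \<Rightarrow> nat \<Rightarrow> (nat \<times> nat) list \<Rightarrow> (corner_hedge \<times> corner_hedge) list" where
  "local_passages a b ds =
     zip (Old a # map (\<lambda>(k, j). Tri j k) ds) (map (\<lambda>(k, j). Tri k j) ds @ [Old b])"

definition local_crosses :: "corner_hedge \<times> corner_hedge \<Rightarrow> corner_hedge \<times> corner_hedge \<Rightarrow> bool" where
  "local_crosses p q \<longleftrightarrow> corner (snd p) = corner (snd q) \<and>
     alternating 4 (corner_pos (fst p)) (corner_pos (fst q)) (corner_pos (snd p)) (corner_pos (snd q))"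

definition local_crossing_count ::
    "nat \<Rightarrow> nat \<Rightarrow> (nat \<times> nat) list \<Rightarrow> nat \<Rightarrow> nat \<Rightarrow> (nat \<times> nat) list \<Rightarrow> nat" where
  "local_crossing_count a b ds c d es = length (remdups (filter (\<lambda>(p, q). local_crosses p q)
     (List.product (local_passages a b ds) (local_passages c d es))))"

definition darts_disjoint :: "(nat \<times> nat) list \<Rightarrow> (nat \<times> nat) list \<Rightarrow> bool" where
  "darts_disjoint ds es \<longleftrightarrow> (\<forall>(k, j) \<in> set ds. (k, j) \<notin> set es \<and> (j, k) \<notin> set es)"

lemma local_crossing_count_eq_card:
  "local_crossing_count a b ds c d es =
     card {(p, q). p \<in> set (local_passages a b ds) \<and> q \<in> set (local_passages c d es) \<and> local_crosses p q}"
proof -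
  have "{(p, q). p \<in> set (local_passages a b ds) \<and> q \<in> set (local_passages c d es) \<and> local_crosses p q}
     = set (filter (\<lambda>(p, q). local_crosses p q) (List.product (local_passages a b ds) (local_passages c d es)))"
    by auto
  thus ?thesis unfolding local_crossing_count_def by (simp add: length_remdups_card_conv)
qed

lemma local_crossing_parity_enumerated:
  "\<forall>a \<in> set [0..<6]. \<forall>b \<in> set [0..<6]. \<forall>c \<in> set [0..<6]. \<forall>d \<in> set [0..<6].
     distinct [a, b, c, d] \<longrightarrow>
     (\<forall>ds \<in> set (triangle_trails (a div 2 + 1) (b div 2 + 1)).
      \<forall>es \<in> set (triangle_trails (c div 2 + 1) (d div 2 + 1)).
        darts_disjoint ds es \<longrightarrow> (alternating 6 a c b d \<longleftrightarrow> odd (local_crossing_count a b ds c d es)))"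
  by code_simp

lemma local_crossing_parity:
  assumes "a < 6" "b < 6" "c < 6" "d < 6" "distinct [a, b, c, d]"
    and "ds \<in> set (triangle_trails (a div 2 + 1) (b div 2 + 1))"
    and "es \<in> set (triangle_trails (c div 2 + 1) (d div 2 + 1))"
    and "darts_disjoint ds es"
  shows "alternating 6 a c b d \<longleftrightarrow> odd (local_crossing_count a b ds c d es)"
  using local_crossing_parity_enumerated assms by simp

lemma alternating_6_rotate_reflect_enumerated:
  "\<forall>r \<in> set [0..<6]. \<forall>a \<in> set [0..<6]. \<forall>b \<in> set [0..<6]. \<forall>c \<in> set [0..<6]. \<forall>d \<in> set [0..<6].
     (alternating 6 ((r + a) mod 6) ((r + b) mod 6) ((r + c) mod 6) ((r + d) mod 6) \<longleftrightarrow>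
        alternating 6 a b c d) \<and>
     (alternating 6 ((r + 6 - a) mod 6) ((r + 6 - b) mod 6) ((r + 6 - c) mod 6) ((r + 6 - d) mod 6) \<longleftrightarrow>
        alternating 6 a b c d)"
  by code_simp

lemma alternating_4_avoids_2_3_enumerated:
  "\<forall>a \<in> set [0..<4]. \<forall>b \<in> set [0..<4]. \<forall>c \<in> set [0..<4]. \<forall>d \<in> set [0..<4].
     alternating 4 a b c d \<longrightarrow> \<not> (a \<in> {2,3} \<and> c \<in> {2,3}) \<and> \<not> (b \<in> {2,3} \<and> d \<in> {2,3})"
  by code_simp

lemma alternating_4_avoids_2_3:
  "alternating 4 a b c d \<Longrightarrow> a < 4 \<Longrightarrow> b < 4 \<Longrightarrow> c < 4 \<Longrightarrow> d < 4 \<Longrightarrow>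
    \<not> (a \<in> {2,3} \<and> c \<in> {2,3}) \<and> \<not> (b \<in> {2,3} \<and> d \<in> {2,3})"
  using alternating_4_avoids_2_3_enumerated by auto

section \<open>Consecutive pairs and blocks of lists\<close>

definition cyclic_pairs :: "'a list \<Rightarrow> ('a \<times> 'a) set" where
  "cyclic_pairs xs = {(xs ! i, xs ! ((i + 1) mod length xs)) | i. i < length xs}"

fun consecutive_pairs :: "'a list \<Rightarrow> ('a \<times> 'a) set" where
  "consecutive_pairs (x # y # zs) = insert (x, y) (consecutive_pairs (y # zs))"
| "consecutive_pairs _ = {}"

lemma consecutive_pairs_eq_zip: "consecutive_pairs xs = set (zip xs (tl xs))"
  by (induction xs rule: consecutive_pairs.induct) auto

lemma zip_tl_eq_zip_butlast: "zip xs (tl xs) = zip (butlast xs) (tl xs)"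
  by (induction xs rule: consecutive_pairs.induct) auto

lemma finite_consecutive_pairs: "finite (consecutive_pairs xs)"
  by (simp add: consecutive_pairs_eq_zip)

lemma consecutive_pairs_append:
  "consecutive_pairs (xs @ y # ys) = consecutive_pairs (xs @ [y]) \<union> consecutive_pairs (y # ys)"
  by (induction xs rule: consecutive_pairs.induct) auto

lemma consecutive_pairs_in_butlast_tl:
  "(u, w) \<in> consecutive_pairs xs \<Longrightarrow> u \<in> set (butlast xs) \<and> w \<in> set (tl xs)"
  unfolding consecutive_pairs_eq_zip zip_tl_eq_zip_butlast
  by (auto dest: set_zip_leftD set_zip_rightD)

lemma consecutive_pairs_in_set: "(u, w) \<in> consecutive_pairs xs \<Longrightarrow> u \<in> set xs \<and> w \<in> set xs"
  using consecutive_pairs_in_butlast_tl by (metis in_set_butlastD list.set_sel(2) tl_Nil empty_iff list.set(1))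

lemma set_subset_consecutive_pairs:
  "length xs \<ge> 2 \<Longrightarrow> set xs \<subseteq> fst ` consecutive_pairs xs \<union> snd ` consecutive_pairs xs"
proof (induction xs rule: consecutive_pairs.induct)
  case (1 x y zs)
  thus ?case by (cases zs) force+
qed auto

lemma cyclic_pairs_eq_consecutive_pairs:
  assumes "xs \<noteq> []"
  shows "cyclic_pairs xs = consecutive_pairs (xs @ [hd xs])"
proof -
  have "consecutive_pairs (xs @ [hd xs]) =
      {((xs @ [hd xs]) ! i, (xs @ [hd xs]) ! Suc i) | i. i < length xs}"
    by (auto simp: consecutive_pairs_eq_zip set_zip nth_tl)
  also have "\<dots> = cyclic_pairs xs"
  proof -
    have "(xs @ [hd xs]) ! i = xs ! i \<and> (xs @ [hd xs]) ! Suc i = xs ! ((i + 1) mod length xs)"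
      if "i < length xs" for i
    proof (cases "Suc i < length xs")
      case False
      hence "Suc i = length xs" using that by simp
      thus ?thesis using assms by (simp add: nth_append hd_conv_nth)
    qed (simp add: nth_append)
    thus ?thesis unfolding cyclic_pairs_def by (smt (verit) Collect_cong)
  qed
  finally show ?thesis ..
qed

lemma cyclic_pairs_rotate1: "cyclic_pairs (rotate1 xs) = cyclic_pairs xs"
proof (cases xs)
  case (Cons x ys)
  show ?thesis
  proof (cases ys)
    case (Cons y zs)
    have "cyclic_pairs (rotate1 xs) = consecutive_pairs (y # zs @ [x] @ [y])"
      using Cons \<open>xs = x # ys\<close> by (simp add: cyclic_pairs_eq_consecutive_pairs)
    also have "\<dots> = consecutive_pairs (y # zs @ [x]) \<union> consecutive_pairs [x, y]"
      using consecutive_pairs_append[of "y # zs" x "[y]"] by simp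
    also have "\<dots> = consecutive_pairs (x # y # zs @ [x])" by auto
    also have "\<dots> = cyclic_pairs xs"
      using Cons \<open>xs = x # ys\<close> by (simp add: cyclic_pairs_eq_consecutive_pairs)
    finally show ?thesis .
  qed (simp add: Cons)
qed simp

lemma cyclic_pairs_rotate: "cyclic_pairs (rotate k xs) = cyclic_pairs xs"
  by (induction k) (auto simp: cyclic_pairs_rotate1)

lemma cyclic_pairs_in_set: "(u, w) \<in> cyclic_pairs xs \<Longrightarrow> u \<in> set xs \<and> w \<in> set xs"
  by (auto simp: cyclic_pairs_def intro!: nth_mem mod_less_divisor)

definition block :: "'a \<times> 'b list \<Rightarrow> ('a + 'b) list" where
  "block p = Inl (fst p) # map Inr (snd p)"

lemma filter_isl_blocks: "filter isl (concat (map block bs)) = map (Inl \<circ> fst) bs"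
  by (induction bs) (auto simp: block_def filter_map o_def)

lemma blocks_decomposition:
  "xs \<noteq> [] \<Longrightarrow> isl (hd xs) \<Longrightarrow> \<exists>bs. bs \<noteq> [] \<and> xs = concat (map block bs)"
proof (induction "length xs" arbitrary: xs rule: less_induct)
  case less
  obtain x ys where xs: "xs = Inl x # ys" using less.prems by (cases xs) (auto simp: isl_def)
  define rs where "rs = takeWhile (\<lambda>u. \<not> isl u) ys"
  define rest where "rest = dropWhile (\<lambda>u. \<not> isl u) ys"
  have ys: "ys = rs @ rest" by (simp add: rs_def rest_def)
  have "\<forall>u \<in> set rs. \<not> isl u" unfolding rs_def by (auto dest: set_takeWhileD)
  hence rs: "rs = map Inr (map projr rs)" by (induction rs) auto
  show ?case
  proof (cases rest)
    case Nil
    thus ?thesis using xs ys rs by (intro exI[of _ "[(x, map projr rs)]"]) (auto simp: block_def)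
  next
    case (Cons r rr)
    hence "isl (hd rest)" unfolding rest_def by (metis hd_dropWhile list.distinct(1))
    moreover have "length rest < length xs" using xs ys by simp
    ultimately obtain bs where "bs \<noteq> []" "rest = concat (map block bs)"
      using less.hyps[of rest] Cons by auto
    thus ?thesis using xs ys rs by (intro exI[of _ "(x, map projr rs) # bs"]) (auto simp: block_def)
  qed
qed

text \<open>Closing each block by the head of the next one (the last block by z) turns a list of
  blocks into segments (x, r, y): a walk Inl x, Inr r, Inl y.\<close>

fun segments :: "('a \<times> 'b list) list \<Rightarrow> 'a \<Rightarrow> ('a \<times> 'b list \<times> 'a) list" where
  "segments [] z = []"
| "segments ((x, r) # bs) z = (x, r, (case bs of [] \<Rightarrow> z | p # _ \<Rightarrow> fst p)) # segments bs z"

definition segment_walk :: "'a \<times> 'b list \<times> 'a \<Rightarrow> ('a + 'b) list" where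
  "segment_walk s = Inl (fst s) # map Inr (fst (snd s)) @ [Inl (snd (snd s))]"

definition segment_tail :: "'a \<times> 'b list \<times> 'a \<Rightarrow> ('a + 'b) list" where
  "segment_tail s = map Inr (fst (snd s)) @ [Inl (snd (snd s))]"

lemma tl_segment_walk: "tl (segment_walk s) = segment_tail s"
  by (simp add: segment_walk_def segment_tail_def)

lemma blocks_append_eq_segment_tails:
  "bs \<noteq> [] \<Longrightarrow>
     concat (map block bs) @ [Inl z] = Inl (fst (hd bs)) # concat (map segment_tail (segments bs z))"
proof (induction bs z rule: segments.induct)
  case (2 x r bs z)
  thus ?case by (cases bs) (simp_all add: block_def segment_tail_def)
qed simp

lemma consecutive_pairs_blocks_eq_segments:
  "bs \<noteq> [] \<Longrightarrow> consecutive_pairs (concat (map block bs) @ [Inl z]) =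
     (\<Union>s \<in> set (segments bs z). consecutive_pairs (segment_walk s))"
proof (induction bs z rule: segments.induct)
  case (2 x r bs z)
  show ?case
  proof (cases bs)
    case Nil thus ?thesis by (simp add: block_def segment_walk_def)
  next
    case (Cons p bs')
    have rest: "concat (map block bs) @ [Inl z] = Inl (fst p) # concat (map segment_tail (segments bs z))"
      using blocks_append_eq_segment_tails[of bs z] Cons by simp
    have "consecutive_pairs (concat (map block ((x, r) # bs)) @ [Inl z]) =
        consecutive_pairs ((Inl x # map Inr r) @ Inl (fst p) # concat (map segment_tail (segments bs z)))"
      using rest by (simp add: block_def)
    also have "\<dots> = consecutive_pairs (segment_walk (x, r, fst p)) \<union>
        consecutive_pairs (concat (map block bs) @ [Inl z])"
      by (subst consecutive_pairs_append) (simp add: rest segment_walk_def)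
    finally show ?thesis using 2 Cons by simp
  qed
qed simp

lemma consecutive_pairs_heads_eq_segment_ends:
  "bs \<noteq> [] \<Longrightarrow> consecutive_pairs (map fst bs @ [z]) = (\<lambda>(x, r, y). (x, y)) ` set (segments bs z)"
proof (induction bs z rule: segments.induct)
  case (2 x r bs z)
  thus ?case by (cases bs) auto
qed simp

lemma segments_drop_ends: "map (\<lambda>(x, r, y). (x, r)) (segments bs z) = bs"
  by (induction bs z rule: segments.induct) auto

lemma Inl_block_head_in_blocks: "x \<in> set (map fst bs) \<Longrightarrow> Inl x \<in> set (concat (map block bs))"
  by (auto simp: block_def)

lemma distinct_block_heads: "distinct (concat (map block bs)) \<Longrightarrow> distinct (map fst bs)"
proof -
  assume "distinct (concat (map block bs))"
  hence "distinct (map (Inl \<circ> fst) bs :: ('a + 'b) list)"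
    unfolding filter_isl_blocks[symmetric] by simp
  thus ?thesis by (auto simp: distinct_map inj_on_def)
qed

lemma cyclic_pairs_blocks:
  assumes "bs \<noteq> []"
  shows "cyclic_pairs (concat (map block bs)) =
    (\<Union>s \<in> set (segments bs (fst (hd bs))). consecutive_pairs (segment_walk s))"
proof -
  have "concat (map block bs) \<noteq> []" "hd (concat (map block bs)) = Inl (fst (hd bs))"
    using assms by (cases bs; simp add: block_def)+
  thus ?thesis
    using assms by (simp add: cyclic_pairs_eq_consecutive_pairs consecutive_pairs_blocks_eq_segments)
qed

lemma cyclic_pairs_block_heads:
  "bs \<noteq> [] \<Longrightarrow> cyclic_pairs (map fst bs) = (\<lambda>(x, r, y). (x, y)) ` set (segments bs (fst (hd bs)))"
  by (simp add: cyclic_pairs_eq_consecutive_pairs consecutive_pairs_heads_eq_segment_ends hd_map)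

lemma distinct_segment_tails:
  assumes "bs \<noteq> []" "distinct (concat (map block bs))"
  shows "distinct (concat (map segment_tail (segments bs (fst (hd bs)))))"
proof -
  let ?xs = "concat (map block bs)"
  have "?xs \<noteq> []" "hd ?xs = Inl (fst (hd bs))" using assms(1) by (cases bs; simp add: block_def)+
  hence "concat (map segment_tail (segments bs (fst (hd bs)))) = tl ?xs @ [hd ?xs]"
    using blocks_append_eq_segment_tails[OF assms(1)] by (metis list.sel(3) hd_Cons_tl tl_append2)
  thus ?thesis using assms(2) \<open>?xs \<noteq> []\<close> by (cases ?xs) auto
qed

lemma card_odd_terms_of_sum_1:
  fixes f :: "'a \<Rightarrow> nat"
  assumes "finite J" "sum f J = 1" "\<And>p. p \<in> J \<Longrightarrow> P p \<longleftrightarrow> odd (f p)"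
  shows "card {p \<in> J. P p} = 1"
proof -
  obtain p0 where p0: "p0 \<in> J" "f p0 = 1" "\<forall>p \<in> J. p0 \<noteq> p \<longrightarrow> f p = 0"
    using assms(1,2) sum_eq_1_iff by blast
  have "{p \<in> J. P p} = {p0}"
    using p0 assms(3) by (auto elim!: oddE)
  thus ?thesis by simp
qed

lemma disjoint_of_distinct_concat:
  assumes "distinct (concat (map f xs))" "\<forall>x \<in> set xs. f x \<noteq> []"
    and "x \<in> set xs" "x' \<in> set xs" "x \<noteq> x'"
  shows "set (f x) \<inter> set (f x') = {}"
proof -
  have "f x \<noteq> f x'"
  proof
    assume eq: "f x = f x'"
    have "[] \<notin> set (map f xs)" using assms(2) by auto
    hence "distinct (map f xs)" using assms(1) by (simp add: distinct_concat_iff removeAll_id)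
    thus False using eq assms(3-5) by (auto simp: distinct_map inj_on_def)
  qed
  thus ?thesis using assms(1,2,3,4) by (auto simp: distinct_concat_iff removeAll_id)
qed

lemma image_map_prod_set_zip: "map_prod f g ` set (zip xs ys) = set (zip (map f xs) (map g ys))"
  by (simp add: zip_map_map map_prod_def case_prod_beta)

lemma card_related_pairs_image:
  assumes "inj_on f A" "inj_on g B" "\<And>a b. a \<in> A \<Longrightarrow> b \<in> B \<Longrightarrow> P a b \<longleftrightarrow> Q (f a) (g b)"
  shows "card {(a, b). a \<in> A \<and> b \<in> B \<and> P a b} = card {(c, d). c \<in> f ` A \<and> d \<in> g ` B \<and> Q c d}"
proof -
  have image: "map_prod f g ` {(a, b). a \<in> A \<and> b \<in> B \<and> P a b} = {(c, d). c \<in> f ` A \<and> d \<in> g ` B \<and> Q c d}"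
    using assms(3) by (auto intro!: image_eqI)
  have inj: "inj_on (map_prod f g) {(a, b). a \<in> A \<and> b \<in> B \<and> P a b}"
    using assms(1,2) by (auto simp: inj_on_def)
  show ?thesis using card_image[OF inj] unfolding image by simp
qed

section \<open>Passages and crossings\<close>

definition passages :: "('v, 'h) sgraph \<Rightarrow> 'h list \<Rightarrow> ('h \<times> 'h) set" where
  "passages G hs = (\<lambda>(x, y). (opp G x, y)) ` cyclic_pairs hs"

definition passages_cross :: "('v, 'h) sgraph \<Rightarrow> 'h \<times> 'h \<Rightarrow> 'h \<times> 'h \<Rightarrow> bool" where
  "passages_cross G \<alpha> \<beta> \<longleftrightarrow> vert G (snd \<alpha>) = vert G (snd \<beta>) \<and>
     alternating (valency G (vert G (snd \<alpha>))) (cyc G (fst \<alpha>)) (cyc G (fst \<beta>)) (cyc G (snd \<alpha>)) (cyc G (snd \<beta>))"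

lemma passages_eq_pass_in_out: "passages G hs = {(pass_in G hs i, pass_out hs i) | i. i < length hs}"
  unfolding passages_def cyclic_pairs_def pass_in_def pass_out_def by auto

lemma Suc_mod_inj: "i < n \<Longrightarrow> j < n \<Longrightarrow> Suc i mod n = Suc j mod n \<Longrightarrow> i = j"
  by (metis Suc_lessI mod_Suc mod_less mod_self nat.distinct(1) old.nat.inject)

lemma inj_on_pass_out: "distinct hs \<Longrightarrow> inj_on (pass_out hs) {..<length hs}"
proof (rule inj_onI)
  fix i j assume "distinct hs" and ij: "i \<in> {..<length hs}" "j \<in> {..<length hs}"
    and "pass_out hs i = pass_out hs j"
  moreover have "Suc i mod length hs < length hs" "Suc j mod length hs < length hs"
    using ij by (auto intro: mod_less_divisor)
  ultimately have "Suc i mod length hs = Suc j mod length hs"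
    by (simp add: pass_out_def nth_eq_iff_index_eq)
  thus "i = j" using ij Suc_mod_inj by auto
qed

lemma crossings_eq_card_crossing_passages:
  assumes "distinct A" "distinct B"
  shows "crossings G A B =
    card {(\<alpha>, \<beta>). \<alpha> \<in> passages G A \<and> \<beta> \<in> passages G B \<and> passages_cross G \<alpha> \<beta>}"
proof -
  define I where "I = {(i, j). i < length A \<and> j < length B \<and>
      vert G (pass_out A i) = vert G (pass_out B j) \<and>
      alternating (valency G (vert G (pass_out A i)))
        (cyc G (pass_in G A i)) (cyc G (pass_in G B j)) (cyc G (pass_out A i)) (cyc G (pass_out B j))}"
  define f where "f = (\<lambda>(i, j). ((pass_in G A i, pass_out A i), (pass_in G B j, pass_out B j)))"
  have "inj_on f I"
  proof (rule inj_onI)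
    fix p p' assume "p \<in> I" "p' \<in> I" "f p = f p'"
    thus "p = p'"
      using inj_onD[OF inj_on_pass_out[OF assms(1)]] inj_onD[OF inj_on_pass_out[OF assms(2)]]
      by (auto simp: f_def I_def)
  qed
  moreover have "f ` I = {(\<alpha>, \<beta>). \<alpha> \<in> passages G A \<and> \<beta> \<in> passages G B \<and> passages_cross G \<alpha> \<beta>}"
    unfolding passages_eq_pass_in_out f_def I_def passages_cross_def by auto
  ultimately show ?thesis unfolding crossings_def I_def[symmetric] by (metis card_image)
qed

lemma is_cycle_facts:
  assumes "is_cycle G C"
  shows "C \<noteq> []" "distinct C" "set C \<subseteq> hedges G" "set C \<inter> opp G ` set C = {}"
    "\<forall>(u, w) \<in> cyclic_pairs C. vert G (opp G u) = vert G w"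
  using assms by (auto simp: is_cycle_def cyclic_pairs_def)

section \<open>The expansion\<close>

locale expansion =
  fixes G :: "('v, 'h) sgraph" and lab :: "'v \<Rightarrow> nat \<Rightarrow> 'h"
  assumes star_graph: "star_graph G"
    and valency_4_or_6: "\<forall>a \<in> verts G. valency G a = 4 \<or> valency G a = 6"
    and lab_ok: "lab_ok G lab"
begin

abbreviation "H \<equiv> expand G lab"

lemma vert_H_Inl: "vert H (Inl h) =
    (if valency G (vert G h) = 6 then (vert G h, lab_idx G lab h div 2 + 1) else (vert G h, 0))"
  by (simp add: expand_def)

lemma fst_vert_H_Inl [simp]: "fst (vert H (Inl h)) = vert G h"
  by (simp add: vert_H_Inl)

lemma vert_H_Inr [simp]: "vert H (Inr e) = (fst e, fst (snd e))"
  by (cases e) (simp add: expand_def)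

lemma opp_H_Inl [simp]: "opp H (Inl h) = Inl (opp G h)"
  by (simp add: expand_def)

lemma opp_H_Inr [simp]: "opp H (Inr e) = Inr (fst e, snd (snd e), fst (snd e))"
  by (cases e) (simp add: expand_def)

lemma cyc_H_Inl: "cyc H (Inl h) = (if valency G (vert G h) = 6 then lab_idx G lab h mod 2 else cyc G h)"
  by (simp add: expand_def)

lemma cyc_H_Inr [simp]: "cyc H (Inr (v, k, j)) = (if j = k mod 3 + 1 then 2 else 3)"
  by (simp add: expand_def)

lemma Inl_in_hedges_H [simp]: "Inl h \<in> hedges H \<longleftrightarrow> h \<in> hedges G"
  by (auto simp: expand_def)

lemma Inr_in_hedges_H [simp]: "Inr (v, k, j) \<in> hedges H \<longleftrightarrow>
    v \<in> verts G \<and> valency G v = 6 \<and> k \<in> {1,2,3} \<and> j \<in> {1,2,3} \<and> k \<noteq> j"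
  by (auto simp: expand_def)

lemma hedge_G: "h \<in> hedges G \<Longrightarrow>
    vert G h \<in> verts G \<and> opp G h \<in> hedges G \<and> opp G h \<noteq> h \<and> opp G (opp G h) = h"
  using star_graph by (auto simp: star_graph_def)

lemma cyc_G_bij: "a \<in> verts G \<Longrightarrow> bij_betw (cyc G) (halfedges_at G a) {0..<valency G a}"
  using star_graph by (auto simp: star_graph_def)

lemma lab_bij: "v \<in> verts G \<Longrightarrow> valency G v = 6 \<Longrightarrow> bij_betw (lab v) {0..<6} (halfedges_at G v)"
  using lab_ok by (auto simp: lab_ok_def)

lemma lab_in_hedges:
  "v \<in> verts G \<Longrightarrow> valency G v = 6 \<Longrightarrow> i < 6 \<Longrightarrow> lab v i \<in> hedges G \<and> vert G (lab v i) = v"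
  using bij_betwE[OF lab_bij] by (auto simp: halfedges_at_def)

lemma lab_idx_lab: "v \<in> verts G \<Longrightarrow> valency G v = 6 \<Longrightarrow> i < 6 \<Longrightarrow> lab_idx G lab (lab v i) = i"
  unfolding lab_idx_def using lab_in_hedges
  by (intro the_equality) (auto dest: inj_onD[OF bij_betw_imp_inj_on[OF lab_bij]])

lemma lab_lab_idx: "h \<in> hedges G \<Longrightarrow> valency G (vert G h) = 6 \<Longrightarrow>
    lab_idx G lab h < 6 \<and> lab (vert G h) (lab_idx G lab h) = h"
proof -
  assume h: "h \<in> hedges G" "valency G (vert G h) = 6"
  have v: "vert G h \<in> verts G" using hedge_G[OF h(1)] by simp
  have "h \<in> lab (vert G h) ` {0..<6}"
    using lab_bij[OF v h(2)] h(1) by (auto simp: bij_betw_def halfedges_at_def)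
  thus ?thesis using lab_idx_lab[OF v h(2)] by force
qed

lemma lab_idx_inj: "h \<in> hedges G \<Longrightarrow> h' \<in> hedges G \<Longrightarrow> vert G h = vert G h' \<Longrightarrow>
    valency G (vert G h) = 6 \<Longrightarrow> lab_idx G lab h = lab_idx G lab h' \<Longrightarrow> h = h'"
  using lab_lab_idx by metis

lemma valency_4_if_not_6: "h \<in> hedges G \<Longrightarrow> valency G (vert G h) \<noteq> 6 \<Longrightarrow> valency G (vert G h) = 4"
  using valency_4_or_6 hedge_G by blast

lemma cyc_H_less_4: "u \<in> hedges H \<Longrightarrow> cyc H u < 4"
proof (cases u)
  case (Inl h)
  assume "u \<in> hedges H"
  moreover have "cyc G h < valency G (vert G h)" if "h \<in> hedges G"
    using cyc_G_bij[of "vert G h"] hedge_G[OF that] that by (auto simp: bij_betw_def halfedges_at_def)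
  ultimately show ?thesis using Inl valency_4_if_not_6[of h] by (auto simp: cyc_H_Inl)
next
  case (Inr e) thus ?thesis by (cases e) auto
qed

lemma opp_H_in_hedges: "u \<in> hedges H \<Longrightarrow> opp H u \<in> hedges H"
  using hedge_G by (cases u) auto

lemma halfedges_at_H_old_vertex:
  assumes "a \<in> verts G" "valency G a \<noteq> 6"
  shows "halfedges_at H (a, 0) = Inl ` halfedges_at G a"
proof (intro set_eqI iffI)
  fix u assume u: "u \<in> halfedges_at H (a, 0)"
  thus "u \<in> Inl ` halfedges_at G a"
    by (cases u) (auto simp: halfedges_at_def vert_H_Inl split: if_splits)
next
  fix u :: "'h + 'v \<times> nat \<times> nat" assume "u \<in> Inl ` halfedges_at G a"
  thus "u \<in> halfedges_at H (a, 0)" using assms by (auto simp: halfedges_at_def vert_H_Inl)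
qed

lemma halfedges_at_H_corner:
  assumes v: "v \<in> verts G" "valency G v = 6" and k: "k \<in> {1,2,3}"
  shows "halfedges_at H (v, k) =
    {Inl (lab v (2*k - 2)), Inl (lab v (2*k - 1)), Inr (v, k, k mod 3 + 1), Inr (v, k, (k + 1) mod 3 + 1)}"
proof (intro set_eqI iffI)
  fix u assume u: "u \<in> halfedges_at H (v, k)"
  show "u \<in> {Inl (lab v (2*k - 2)), Inl (lab v (2*k - 1)), Inr (v, k, k mod 3 + 1), Inr (v, k, (k + 1) mod 3 + 1)}"
  proof (cases u)
    case (Inl h)
    have h: "h \<in> hedges G" "vert H (Inl h) = (v, k)" using u Inl by (auto simp: halfedges_at_def)
    hence vh: "valency G (vert G h) = 6" "vert G h = v" "lab_idx G lab h div 2 + 1 = k"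
      using k by (auto simp: vert_H_Inl split: if_splits)
    hence "lab_idx G lab h = 2*k - 2 \<or> lab_idx G lab h = 2*k - 1" "lab v (lab_idx G lab h) = h"
      using lab_lab_idx[OF h(1)] by auto
    thus ?thesis using Inl by auto
  next
    case (Inr e)
    thus ?thesis using u k by (cases e) (auto simp: halfedges_at_def)
  qed
next
  fix u :: "'h + 'v \<times> nat \<times> nat"
  assume u: "u \<in> {Inl (lab v (2*k - 2)), Inl (lab v (2*k - 1)), Inr (v, k, k mod 3 + 1), Inr (v, k, (k + 1) mod 3 + 1)}"
  have "2*k - 2 < 6" "2*k - 1 < 6" "(2*k - 2) div 2 + 1 = k" "(2*k - 1) div 2 + 1 = k" using k by auto
  thus "u \<in> halfedges_at H (v, k)"
    using u lab_in_hedges[OF v] lab_idx_lab[OF v] v k by (auto simp: halfedges_at_def vert_H_Inl)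
qed

lemma valency_H_corner:
  assumes v: "v \<in> verts G" "valency G v = 6" and k: "k \<in> {1,2,3}"
  shows "valency H (v, k) = 4"
proof -
  have "lab v (2*k - 2) \<noteq> lab v (2*k - 1)"
    using inj_onD[OF bij_betw_imp_inj_on[OF lab_bij[OF v]], of "2*k - 2" "2*k - 1"] k by auto
  moreover have "k mod 3 + 1 \<noteq> (k + 1) mod 3 + 1" using k by auto
  ultimately show ?thesis unfolding valency_def halfedges_at_H_corner[OF v k] by simp
qed

lemma valency_H: "u \<in> hedges H \<Longrightarrow> valency H (vert H u) = 4"
proof (cases u)
  case (Inl h)
  assume "u \<in> hedges H"
  hence h: "h \<in> hedges G" using Inl by simp
  show ?thesis
  proof (cases "valency G (vert G h) = 6")
    case True
    hence "lab_idx G lab h div 2 + 1 \<in> {1,2,3}" using lab_lab_idx[OF h] by auto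
    thus ?thesis using True Inl valency_H_corner hedge_G[OF h] by (simp add: vert_H_Inl)
  next
    case False
    have "card (Inl ` halfedges_at G (vert G h) :: ('h + 'v \<times> nat \<times> nat) set) = valency G (vert G h)"
      by (simp add: card_image valency_def)
    thus ?thesis using False Inl halfedges_at_H_old_vertex hedge_G[OF h] valency_4_if_not_6[OF h False]
      by (simp add: vert_H_Inl valency_def)
  qed
next
  case (Inr e)
  assume "u \<in> hedges H"
  thus ?thesis using Inr valency_H_corner by (cases e) auto
qed

definition local_code :: "'h + 'v \<times> nat \<times> nat \<Rightarrow> corner_hedge" where
  "local_code u = (case u of Inl h \<Rightarrow> Old (lab_idx G lab h) | Inr e \<Rightarrow> Tri (fst (snd e)) (snd (snd e)))"

definition at_vertex :: "'v \<Rightarrow> 'h + 'v \<times> nat \<times> nat \<Rightarrow> bool" where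
  "at_vertex v u \<longleftrightarrow> (case u of Inl h \<Rightarrow> h \<in> hedges G \<and> vert G h = v | Inr e \<Rightarrow> fst e = v)"

lemma fst_vert_H_at_vertex: "at_vertex v u \<Longrightarrow> fst (vert H u) = v"
  by (cases u) (auto simp: at_vertex_def)

lemma vert_cyc_H_local_code:
  assumes "valency G v = 6" "at_vertex v u"
  shows "vert H u = (v, corner (local_code u)) \<and> cyc H u = corner_pos (local_code u)"
  using assms by (cases u) (auto simp: at_vertex_def local_code_def vert_H_Inl cyc_H_Inl split: prod.split)

lemma inj_on_local_code:
  assumes "valency G v = 6"
  shows "inj_on local_code {u. at_vertex v u}"
proof (rule inj_onI)
  fix u u' assume "u \<in> {u. at_vertex v u}" "u' \<in> {u. at_vertex v u}" "local_code u = local_code u'"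
  thus "u = u'" using assms lab_idx_inj
    by (cases u; cases u') (auto simp: at_vertex_def local_code_def prod_eq_iff)
qed

definition H_walk :: "('h + 'v \<times> nat \<times> nat) list \<Rightarrow> bool" where
  "H_walk us \<longleftrightarrow> (\<forall>(u, w) \<in> consecutive_pairs us. vert H (opp H u) = vert H w)"

lemma H_walk_Cons: "H_walk (u # w # us) \<longleftrightarrow> vert H (opp H u) = vert H w \<and> H_walk (w # us)"
  by (simp add: H_walk_def)

text \<open>A segment (x, r, y) of a cycle of H runs from the old half-edge x through the triangle
  darts r to the old half-edge y; in G it is the single passage (opp x, y).\<close>

definition cycle_segment :: "('h + 'v \<times> nat \<times> nat) set \<Rightarrow> 'h \<times> ('v \<times> nat \<times> nat) list \<times> 'h \<Rightarrow> bool" where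
  "cycle_segment S s \<longleftrightarrow> set (segment_walk s) \<subseteq> S \<and> H_walk (segment_walk s) \<and> distinct (segment_tail s)"

definition segment_passages ::
    "'h \<times> ('v \<times> nat \<times> nat) list \<times> 'h \<Rightarrow> (('h + 'v \<times> nat \<times> nat) \<times> ('h + 'v \<times> nat \<times> nat)) set" where
  "segment_passages s = (\<lambda>(u, w). (opp H u, w)) ` consecutive_pairs (segment_walk s)"

definition projected_passage :: "'h \<times> ('v \<times> nat \<times> nat) list \<times> 'h \<Rightarrow> 'h \<times> 'h" where
  "projected_passage s = (opp G (fst s), snd (snd s))"

lemma triangle_walk_stays_at_vertex:
  "H_walk (u0 # map Inr r @ [Inl y]) \<Longrightarrow>
     (\<forall>e \<in> set r. fst e = fst (vert H (opp H u0))) \<and> vert G y = fst (vert H (opp H u0))"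
proof (induction r arbitrary: u0)
  case (Cons e r)
  hence "vert H (opp H u0) = vert H (Inr e)" "H_walk (Inr e # map Inr r @ [Inl y])"
    by (simp_all add: H_walk_Cons)
  with Cons.IH show ?case by auto
qed (auto simp: H_walk_def)

lemma triangle_walk_dart_walk:
  "H_walk (u0 # map Inr r @ [Inl y]) \<Longrightarrow> vert H (opp H u0) = (v, k) \<Longrightarrow> vert H (Inl y) = (v, k') \<Longrightarrow>
     dart_walk k k' (map snd r)"
proof (induction r arbitrary: u0 k)
  case (Cons e r)
  hence "vert H (Inr e) = (v, k)" "H_walk (Inr e # map Inr r @ [Inl y])"
    by (simp_all add: H_walk_Cons)
  with Cons.IH Cons.prems(3) show ?case by (cases e) auto
qed (simp add: H_walk_def)

lemma cycle_segment_members: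
  assumes "S \<subseteq> hedges H" "cycle_segment S (x, r, y)"
  shows "Inl x \<in> S" "Inl y \<in> S" "\<forall>e \<in> set r. Inr e \<in> S" "x \<in> hedges G" "y \<in> hedges G"
  using assms by (auto simp: cycle_segment_def segment_walk_def)

lemma cycle_segment_at_vertex:
  assumes "cycle_segment S (x, r, y)"
  shows "vert G y = vert G (opp G x)" "\<forall>e \<in> set r. fst e = vert G (opp G x)"
  using triangle_walk_stays_at_vertex[of "Inl x" r y] assms
  by (auto simp: cycle_segment_def segment_walk_def)

lemma segment_passages_at_vertex:
  assumes S: "S \<subseteq> hedges H" and s: "cycle_segment S (x, r, y)" and \<alpha>: "\<alpha> \<in> segment_passages (x, r, y)"
  shows "snd \<alpha> \<in> S" "at_vertex (vert G (opp G x)) (fst \<alpha>)" "at_vertex (vert G (opp G x)) (snd \<alpha>)"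
proof -
  obtain u w where uw: "(u, w) \<in> consecutive_pairs (segment_walk (x, r, y))" "\<alpha> = (opp H u, w)"
    using \<alpha> by (auto simp: segment_passages_def)
  show "snd \<alpha> \<in> S" using uw s consecutive_pairs_in_set by (fastforce simp: cycle_segment_def)
  have "(u = Inl x \<or> u \<in> Inr ` set r) \<and> (w = Inl y \<or> w \<in> Inr ` set r)"
    using consecutive_pairs_in_butlast_tl[OF uw(1)] by (auto simp: segment_walk_def butlast_append)
  thus "at_vertex (vert G (opp G x)) (fst \<alpha>)" "at_vertex (vert G (opp G x)) (snd \<alpha>)"
    using uw(2) cycle_segment_at_vertex[OF s] cycle_segment_members[OF S s] hedge_G
    by (auto simp: at_vertex_def)
qed

lemma alternating_6_lab:
  assumes v: "v \<in> verts G" "valency G v = 6" and "a < 6" "b < 6" "c < 6" "d < 6"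
  shows "alternating 6 (cyc G (lab v a)) (cyc G (lab v b)) (cyc G (lab v c)) (cyc G (lab v d)) \<longleftrightarrow>
    alternating 6 a b c d"
proof -
  obtain r where r: "r < 6"
    "(\<forall>i < 6. cyc G (lab v i) = (r + i) mod 6) \<or> (\<forall>i < 6. cyc G (lab v i) = (r + 6 - i) mod 6)"
    using lab_ok v by (auto simp: lab_ok_def)
  have "r \<in> set [0..<6]" "a \<in> set [0..<6]" "b \<in> set [0..<6]" "c \<in> set [0..<6]" "d \<in> set [0..<6]"
    using r assms by auto
  note invariance = alternating_6_rotate_reflect_enumerated[rule_format, OF this]
  from r(2) show ?thesis
  proof
    assume "\<forall>i < 6. cyc G (lab v i) = (r + i) mod 6" thus ?thesis using invariance assms by simp
  next
    assume "\<forall>i < 6. cyc G (lab v i) = (r + 6 - i) mod 6" thus ?thesis using invariance assms by simp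
  qed
qed

lemma local_code_segment_passages:
  "map_prod local_code local_code ` segment_passages (x, r, y) =
     set (local_passages (lab_idx G lab (opp G x)) (lab_idx G lab y) (map snd r))"
proof -
  have "segment_passages (x, r, y) =
      set (zip (map (opp H) (butlast (segment_walk (x, r, y)))) (tl (segment_walk (x, r, y))))"
    unfolding segment_passages_def consecutive_pairs_eq_zip zip_tl_eq_zip_butlast
    by (simp add: zip_map1 case_prod_beta image_iff)
  thus ?thesis
    by (simp add: image_map_prod_set_zip local_passages_def segment_walk_def butlast_append
        local_code_def o_def case_prod_beta)
qed

lemma inj_on_local_code_segment_passages:
  assumes "S \<subseteq> hedges H" "cycle_segment S (x, r, y)" "valency G (vert G (opp G x)) = 6"
  shows "inj_on (map_prod local_code local_code) (segment_passages (x, r, y))"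
proof (rule inj_onI)
  fix \<alpha> \<beta> assume \<alpha>\<beta>: "\<alpha> \<in> segment_passages (x, r, y)" "\<beta> \<in> segment_passages (x, r, y)"
    and "map_prod local_code local_code \<alpha> = map_prod local_code local_code \<beta>"
  hence "local_code (fst \<alpha>) = local_code (fst \<beta>)" "local_code (snd \<alpha>) = local_code (snd \<beta>)"
    by (auto simp: map_prod_def split: prod.splits)
  thus "\<alpha> = \<beta>"
    using inj_onD[OF inj_on_local_code[OF assms(3)]] segment_passages_at_vertex[OF assms(1,2)] \<alpha>\<beta>
    by (simp add: prod_eq_iff)
qed

lemma segment_triangle_trail:
  assumes S: "S \<subseteq> hedges H" and no_opp: "S \<inter> opp H ` S = {}" and s: "cycle_segment S (x, r, y)"
    and v: "valency G (vert G (opp G x)) = 6"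
  shows "map snd r \<in> set (triangle_trails (lab_idx G lab (opp G x) div 2 + 1) (lab_idx G lab y div 2 + 1))"
proof (rule triangle_trail_in_table)
  note members = cycle_segment_members[OF S s] and at_v = cycle_segment_at_vertex[OF s]
  have same_vertex: "e = e'" if "e \<in> set r" "e' \<in> set r" "snd e = snd e'" for e e'
    using that at_v(2) by (simp add: prod_eq_iff)
  show "set (map snd r) \<subseteq> set triangle_darts"
  proof
    fix p assume "p \<in> set (map snd r)"
    then obtain v' k j where "(v', k, j) \<in> set r" "p = (k, j)" by auto
    moreover hence "Inr (v', k, j) \<in> hedges H" using members(3) S by auto
    ultimately show "p \<in> set triangle_darts" by (auto simp: triangle_darts_def)
  qed
  have "distinct r" using s by (simp add: cycle_segment_def segment_tail_def distinct_map)
  hence "distinct (map snd r)" using same_vertex by (simp add: distinct_map inj_on_def)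
  moreover have "(j, k) \<notin> set (map snd r)" if kj: "(k, j) \<in> set (map snd r)" for k j
  proof
    assume "(j, k) \<in> set (map snd r)"
    then obtain e e' where "e \<in> set r" "e' \<in> set r" "snd e = (k, j)" "snd e' = (j, k)"
      using kj by auto
    moreover hence "Inr e' = opp H (Inr e)" using at_v(2) by (auto simp: prod_eq_iff)
    ultimately have "Inr e' \<in> S \<inter> opp H ` S" using members(3) by blast
    thus False using no_opp by blast
  qed
  moreover have "dart_walk (lab_idx G lab (opp G x) div 2 + 1) (lab_idx G lab y div 2 + 1) (map snd r)"
    using s at_v(1) v by (intro triangle_walk_dart_walk[of "Inl x" r y "vert G (opp G x)"])
      (auto simp: cycle_segment_def segment_walk_def vert_H_Inl)
  ultimately show "triangle_trail (lab_idx G lab (opp G x) div 2 + 1) (lab_idx G lab y div 2 + 1) (map snd r)"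
    unfolding triangle_trail_def by fast
  show "lab_idx G lab (opp G x) div 2 + 1 \<in> {1,2,3}" "lab_idx G lab y div 2 + 1 \<in> {1,2,3}"
    using lab_lab_idx[of "opp G x"] lab_lab_idx[of y] members(4,5) hedge_G[of x] v at_v(1) by auto
qed

definition segment_crossings ::
    "'h \<times> ('v \<times> nat \<times> nat) list \<times> 'h \<Rightarrow> 'h \<times> ('v \<times> nat \<times> nat) list \<times> 'h \<Rightarrow>
      ((('h + 'v \<times> nat \<times> nat) \<times> ('h + 'v \<times> nat \<times> nat)) \<times>
       (('h + 'v \<times> nat \<times> nat) \<times> ('h + 'v \<times> nat \<times> nat))) set" where
  "segment_crossings s t =
     {(\<alpha>, \<beta>). \<alpha> \<in> segment_passages s \<and> \<beta> \<in> segment_passages t \<and> passages_cross H \<alpha> \<beta>}"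

lemma finite_segment_crossings: "finite (segment_crossings s t)"
proof -
  have "finite (segment_passages s \<times> segment_passages t)"
    by (simp add: segment_passages_def finite_consecutive_pairs)
  thus ?thesis by (rule rev_finite_subset) (auto simp: segment_crossings_def)
qed

lemma segment_crossings_different_vertices:
  assumes "SA \<subseteq> hedges H" "SB \<subseteq> hedges H" "cycle_segment SA (x, r, y)" "cycle_segment SB (z, q, w)"
    and "vert G (opp G x) \<noteq> vert G (opp G z)"
  shows "segment_crossings (x, r, y) (z, q, w) = {}"
proof -
  have False if "\<alpha> \<in> segment_passages (x, r, y)" "\<beta> \<in> segment_passages (z, q, w)"
    "passages_cross H \<alpha> \<beta>" for \<alpha> \<beta>
  proof -
    have "fst (vert H (snd \<alpha>)) = vert G (opp G x)" "fst (vert H (snd \<beta>)) = vert G (opp G z)"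
      using segment_passages_at_vertex(3)[OF assms(1,3) that(1)]
        segment_passages_at_vertex(3)[OF assms(2,4) that(2)] fst_vert_H_at_vertex by blast+
    moreover have "vert H (snd \<alpha>) = vert H (snd \<beta>)" using that(3) by (simp add: passages_cross_def)
    ultimately show False using assms(5) by simp
  qed
  thus ?thesis unfolding segment_crossings_def by blast
qed

lemma cycle_segment_at_old_vertex:
  assumes "S \<subseteq> hedges H" "cycle_segment S (x, r, y)" "valency G (vert G (opp G x)) \<noteq> 6"
  shows "r = []"
proof (rule ccontr)
  assume "r \<noteq> []"
  then obtain e r' where r: "r = e # r'" by (cases r) auto
  hence "vert H (opp H (Inl x)) = vert H (Inr e)" "Inr e \<in> hedges H"
    using assms(1,2) by (auto simp: cycle_segment_def segment_walk_def H_walk_Cons)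
  thus False using assms(3) by (cases e) (auto simp: vert_H_Inl)
qed

lemma segment_crossings_at_old_vertex:
  assumes S: "SA \<subseteq> hedges H" "SB \<subseteq> hedges H"
    and s: "cycle_segment SA (x, r, y)" and t: "cycle_segment SB (z, q, w)"
    and v: "vert G (opp G x) = v" "vert G (opp G z) = v" "valency G v \<noteq> 6"
  shows "card (segment_crossings (x, r, y) (z, q, w)) =
    (if passages_cross G (projected_passage (x, r, y)) (projected_passage (z, q, w)) then 1 else 0)"
proof -
  have "r = []" "q = []" using cycle_segment_at_old_vertex S s t v by auto
  hence passages: "segment_passages (x, r, y) = {(Inl (opp G x), Inl y)}"
    "segment_passages (z, q, w) = {(Inl (opp G z), Inl w)}"
    by (simp_all add: segment_passages_def segment_walk_def)
  have "vert G y = v" "vert G w = v" using cycle_segment_at_vertex s t v by auto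
  moreover have "valency H (vert H (Inl y)) = 4"
    using valency_H cycle_segment_members(2)[OF S(1) s] S(1) by auto
  ultimately have "passages_cross H (Inl (opp G x), Inl y) (Inl (opp G z), Inl w) \<longleftrightarrow>
      passages_cross G (projected_passage (x, r, y)) (projected_passage (z, q, w))"
    using v valency_4_if_not_6 cycle_segment_members(5)[OF S(1) s]
    by (auto simp: passages_cross_def projected_passage_def vert_H_Inl cyc_H_Inl)
  hence "segment_crossings (x, r, y) (z, q, w) =
      (if passages_cross G (projected_passage (x, r, y)) (projected_passage (z, q, w))
       then {((Inl (opp G x), Inl y), (Inl (opp G z), Inl w))} else {})"
    using passages by (auto simp: segment_crossings_def)
  thus ?thesis by simp
qed

lemma passages_cross_H_iff_local_crosses:
  assumes "valency G v = 6" "at_vertex v (fst \<alpha>)" "at_vertex v (snd \<alpha>)"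
    "at_vertex v (fst \<beta>)" "at_vertex v (snd \<beta>)" "snd \<alpha> \<in> hedges H"
  shows "passages_cross H \<alpha> \<beta> \<longleftrightarrow>
    local_crosses (map_prod local_code local_code \<alpha>) (map_prod local_code local_code \<beta>)"
  using vert_cyc_H_local_code[OF assms(1)] assms(2-5) valency_H[OF assms(6)]
  by (cases \<alpha>; cases \<beta>) (auto simp: passages_cross_def local_crosses_def)

lemma segment_crossings_local_count:
  assumes S: "SA \<subseteq> hedges H" "SB \<subseteq> hedges H"
    and s: "cycle_segment SA (x, r, y)" and t: "cycle_segment SB (z, q, w)"
    and v: "vert G (opp G x) = v" "vert G (opp G z) = v" "valency G v = 6"
  shows "card (segment_crossings (x, r, y) (z, q, w)) =
    local_crossing_count (lab_idx G lab (opp G x)) (lab_idx G lab y) (map snd r)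
      (lab_idx G lab (opp G z)) (lab_idx G lab w) (map snd q)"
  unfolding segment_crossings_def local_crossing_count_eq_card
    local_code_segment_passages[symmetric]
proof (rule card_related_pairs_image)
  show "inj_on (map_prod local_code local_code) (segment_passages (x, r, y))"
    "inj_on (map_prod local_code local_code) (segment_passages (z, q, w))"
    using inj_on_local_code_segment_passages S s t v by auto
  fix \<alpha> \<beta> assume \<alpha>: "\<alpha> \<in> segment_passages (x, r, y)" and \<beta>: "\<beta> \<in> segment_passages (z, q, w)"
  have "at_vertex v (fst \<alpha>)" "at_vertex v (snd \<alpha>)" "snd \<alpha> \<in> hedges H"
    using segment_passages_at_vertex[OF S(1) s \<alpha>] v(1) S(1) by auto
  moreover have "at_vertex v (fst \<beta>)" "at_vertex v (snd \<beta>)"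
    using segment_passages_at_vertex[OF S(2) t \<beta>] v(2) by auto
  ultimately show "passages_cross H \<alpha> \<beta> \<longleftrightarrow>
      local_crosses (map_prod local_code local_code \<alpha>) (map_prod local_code local_code \<beta>)"
    using passages_cross_H_iff_local_crosses[OF v(3)] by blast
qed

lemma cyc_H_triangle: "\<not> isl u \<Longrightarrow> cyc H u \<in> {2,3} \<and> cyc H (opp H u) \<in> {2,3}"
  by (cases u) (auto split: if_split_asm)

lemma crossings_triangle_cycle:
  assumes A: "is_cycle H A" and B: "is_cycle H B"
    and triangle: "(\<forall>u \<in> set A. \<not> isl u) \<or> (\<forall>u \<in> set B. \<not> isl u)"
  shows "crossings H A B = 0"
proof -
  note CA = is_cycle_facts[OF A] and CB = is_cycle_facts[OF B]
  have "\<not> passages_cross H \<alpha> \<beta>" if passages: "\<alpha> \<in> passages H A" "\<beta> \<in> passages H B" for \<alpha> \<beta>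
  proof
    assume cross: "passages_cross H \<alpha> \<beta>"
    obtain u w u' w' where uw: "(u, w) \<in> cyclic_pairs A" "\<alpha> = (opp H u, w)"
      "(u', w') \<in> cyclic_pairs B" "\<beta> = (opp H u', w')"
      using passages by (auto simp: passages_def)
    hence mem: "u \<in> set A" "w \<in> set A" "u' \<in> set B" "w' \<in> set B" by (auto dest: cyclic_pairs_in_set)
    hence "opp H u \<in> hedges H" "w \<in> hedges H" "opp H u' \<in> hedges H" "w' \<in> hedges H"
      using CA(3) CB(3) opp_H_in_hedges by auto
    moreover have "alternating 4 (cyc H (opp H u)) (cyc H (opp H u')) (cyc H w) (cyc H w')"
      using cross uw valency_H[OF \<open>w \<in> hedges H\<close>] by (simp add: passages_cross_def)
    ultimately show False
      using triangle mem alternating_4_avoids_2_3 cyc_H_less_4 cyc_H_triangle by meson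
  qed
  hence "{(\<alpha>, \<beta>). \<alpha> \<in> passages H A \<and> \<beta> \<in> passages H B \<and> passages_cross H \<alpha> \<beta>} = {}"
    by blast
  thus ?thesis unfolding crossings_eq_card_crossing_passages[OF CA(2) CB(2)] by (simp only: card.empty)
qed

lemma segment_darts_disjoint:
  assumes S: "SA \<subseteq> hedges H" "SB \<subseteq> hedges H"
    and disjoint: "(SA \<union> opp H ` SA) \<inter> (SB \<union> opp H ` SB) = {}"
    and s: "cycle_segment SA (x, r, y)" and t: "cycle_segment SB (z, q, w)"
    and v: "vert G (opp G x) = v" "vert G (opp G z) = v"
  shows "darts_disjoint (map snd r) (map snd q)"
proof -
  have "(k, j) \<notin> set (map snd q) \<and> (j, k) \<notin> set (map snd q)" if kj: "(k, j) \<in> set (map snd r)" for k j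
  proof -
    obtain e where e: "e \<in> set r" "snd e = (k, j)" using kj by auto
    have at_v: "fst e = v" "\<forall>e' \<in> set q. fst e' = v"
      using cycle_segment_at_vertex s t e v by auto
    have "Inr e \<in> SA" "Inr (v, j, k) = opp H (Inr e)"
      using cycle_segment_members(3)[OF S(1) s] e at_v by auto
    hence "Inr (v, k, j) \<notin> SB" "Inr (v, j, k) \<notin> SB"
      using e at_v disjoint by (auto simp: prod_eq_iff)
    thus ?thesis using cycle_segment_members(3)[OF S(2) t] at_v(2) by (auto simp: prod_eq_iff)
  qed
  thus ?thesis unfolding darts_disjoint_def by blast
qed

lemma segment_crossings_parity_at_triangle:
  assumes S: "SA \<subseteq> hedges H" "SB \<subseteq> hedges H"
    and no_opp: "SA \<inter> opp H ` SA = {}" "SB \<inter> opp H ` SB = {}"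
    and disjoint: "(SA \<union> opp H ` SA) \<inter> (SB \<union> opp H ` SB) = {}"
    and s: "cycle_segment SA (x, r, y)" and t: "cycle_segment SB (z, q, w)"
    and v: "vert G (opp G x) = v" "vert G (opp G z) = v" "valency G v = 6"
  shows "passages_cross G (projected_passage (x, r, y)) (projected_passage (z, q, w)) \<longleftrightarrow>
    odd (card (segment_crossings (x, r, y) (z, q, w)))"
proof -
  note ms = cycle_segment_members[OF S(1) s] and mt = cycle_segment_members[OF S(2) t]
  have vy: "vert G y = v" "vert G w = v" using cycle_segment_at_vertex s t v by auto
  have hedges: "opp G x \<in> hedges G" "opp G z \<in> hedges G" using hedge_G ms(4) mt(4) by auto
  define a b c d where "a = lab_idx G lab (opp G x)" "b = lab_idx G lab y"
    "c = lab_idx G lab (opp G z)" "d = lab_idx G lab w"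
  have labels: "a < 6" "b < 6" "c < 6" "d < 6"
    "lab v a = opp G x" "lab v b = y" "lab v c = opp G z" "lab v d = w"
    using lab_lab_idx[OF hedges(1)] lab_lab_idx[OF hedges(2)] lab_lab_idx[OF ms(5)] lab_lab_idx[OF mt(5)]
      v vy unfolding a_b_c_d_def by auto
  have "Inl (opp G x) \<in> opp H ` SA" "Inl (opp G z) \<in> opp H ` SB"
    using ms(1) mt(1) by force+
  moreover have "opp G x \<noteq> opp G z"
    using ms(1) mt(1) disjoint hedge_G ms(4) mt(4) by (metis IntI UnI1 empty_iff)
  ultimately have "distinct [opp G x, y, opp G z, w]"
    using ms(2) mt(2) no_opp disjoint by auto
  hence "distinct [a, b, c, d]" using labels by auto
  moreover have "map snd r \<in> set (triangle_trails (a div 2 + 1) (b div 2 + 1))"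
    "map snd q \<in> set (triangle_trails (c div 2 + 1) (d div 2 + 1))"
    using segment_triangle_trail S no_opp s t v unfolding a_b_c_d_def by auto
  moreover have "darts_disjoint (map snd r) (map snd q)"
    using segment_darts_disjoint[OF S disjoint s t v(1,2)] .
  ultimately have "alternating 6 a c b d \<longleftrightarrow> odd (local_crossing_count a b (map snd r) c d (map snd q))"
    using local_crossing_parity labels by blast
  moreover have "passages_cross G (projected_passage (x, r, y)) (projected_passage (z, q, w)) \<longleftrightarrow>
      alternating 6 a c b d"
    using alternating_6_lab[of v a c b d] labels v vy hedge_G[OF hedges(1)]
    by (simp add: passages_cross_def projected_passage_def)
  ultimately show ?thesis
    using segment_crossings_local_count[OF S s t v] unfolding a_b_c_d_def by simp
qed

lemma segment_crossings_parity:
  assumes S: "SA \<subseteq> hedges H" "SB \<subseteq> hedges H"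
    and no_opp: "SA \<inter> opp H ` SA = {}" "SB \<inter> opp H ` SB = {}"
    and disjoint: "(SA \<union> opp H ` SA) \<inter> (SB \<union> opp H ` SB) = {}"
    and s: "cycle_segment SA s" and t: "cycle_segment SB t"
  shows "passages_cross G (projected_passage s) (projected_passage t) \<longleftrightarrow>
    odd (card (segment_crossings s t))"
proof -
  obtain x r y z q w where st: "s = (x, r, y)" "t = (z, q, w)" by (cases s, cases t) auto
  define v where "v = vert G (opp G x)"
  consider "vert G (opp G z) \<noteq> v" | "vert G (opp G z) = v" "valency G v \<noteq> 6"
    | "vert G (opp G z) = v" "valency G v = 6" by blast
  thus ?thesis
  proof cases
    case 1
    hence "\<not> passages_cross G (projected_passage s) (projected_passage t)"
      using cycle_segment_at_vertex s t st v_def by (simp add: passages_cross_def projected_passage_def)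
    thus ?thesis using segment_crossings_different_vertices S s t st 1 v_def by simp
  next
    case 2
    thus ?thesis using segment_crossings_at_old_vertex[OF S] s t st v_def by simp
  next
    case 3
    thus ?thesis using segment_crossings_parity_at_triangle[OF S no_opp disjoint] s t st v_def by simp
  qed
qed

lemma snd_segment_passage_in_tail: "\<alpha> \<in> segment_passages s \<Longrightarrow> snd \<alpha> \<in> set (segment_tail s)"
  using consecutive_pairs_in_butlast_tl by (fastforce simp: segment_passages_def tl_segment_walk)

lemma cycle_segment_of_cyclic_pairs:
  assumes C: "is_cycle H C" and sub: "consecutive_pairs (segment_walk s) \<subseteq> cyclic_pairs C"
    and "distinct (segment_tail s)"
  shows "cycle_segment (set C) s"
proof -
  have "set (segment_walk s) \<subseteq>
      fst ` consecutive_pairs (segment_walk s) \<union> snd ` consecutive_pairs (segment_walk s)"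
    by (rule set_subset_consecutive_pairs) (simp add: segment_walk_def)
  hence "set (segment_walk s) \<subseteq> set C" using sub cyclic_pairs_in_set by fastforce
  moreover have "H_walk (segment_walk s)"
    using is_cycle_facts(5)[OF C] sub by (auto simp: H_walk_def)
  ultimately show ?thesis using assms(3) by (simp add: cycle_segment_def)
qed

definition cycle_projection ::
    "('h + 'v \<times> nat \<times> nat) list \<Rightarrow> 'h list \<Rightarrow> ('h \<times> ('v \<times> nat \<times> nat) list \<times> 'h) list \<Rightarrow> bool" where
  "cycle_projection C Cg segs \<longleftrightarrow>
     Cg \<noteq> [] \<and> distinct Cg \<and> (\<forall>x \<in> set Cg. Inl x \<in> set C) \<and> map fst segs = Cg \<and>
     cyclic_pairs Cg = (\<lambda>(x, r, y). (x, y)) ` set segs \<and>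
     passages H C = (\<Union>s \<in> set segs. segment_passages s) \<and>
     (\<forall>s \<in> set segs. cycle_segment (set C) s) \<and>
     (\<forall>s \<in> set segs. \<forall>s' \<in> set segs. s \<noteq> s' \<longrightarrow> segment_passages s \<inter> segment_passages s' = {})"

lemma cycle_segment_decomposition:
  assumes C: "is_cycle H C" and old: "\<exists>u \<in> set C. isl u"
  obtains Cg segs where "cycle_projection C Cg segs"
proof -
  note CC = is_cycle_facts[OF C]
  obtain i where i: "i < length C" "isl (C ! i)" using old by (auto simp: in_set_conv_nth)
  define C' where "C' = rotate i C"
  have "C' \<noteq> []" "isl (hd C')" using i CC(1) by (simp_all add: C'_def hd_rotate_conv_nth)
  then obtain bs where bs: "bs \<noteq> []" "C' = concat (map block bs)" using blocks_decomposition by blast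
  define segs where "segs = segments bs (fst (hd bs))"
  have set_C': "set C' = set C" and "distinct C'" using CC(2) by (simp_all add: C'_def)
  hence old_in_C: "\<forall>x \<in> set (map fst bs). Inl x \<in> set C" and "distinct (map fst bs)"
    using Inl_block_head_in_blocks[of _ bs] distinct_block_heads[of bs] bs(2) by simp_all
  have heads: "map fst segs = map fst bs"
    using arg_cong[OF segments_drop_ends[of bs "fst (hd bs)"], of "map fst"] by (simp add: segs_def o_def case_prod_beta)
  have cyclic: "cyclic_pairs C = (\<Union>s \<in> set segs. consecutive_pairs (segment_walk s))"
    using cyclic_pairs_rotate[of i C] cyclic_pairs_blocks[OF bs(1)] bs(2) by (simp add: C'_def segs_def)
  have tails: "distinct (concat (map segment_tail segs))"
    using distinct_segment_tails bs \<open>distinct C'\<close> by (simp add: segs_def)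
  have "cycle_segment (set C) s" if s: "s \<in> set segs" for s
  proof (rule cycle_segment_of_cyclic_pairs[OF C])
    show "consecutive_pairs (segment_walk s) \<subseteq> cyclic_pairs C" using s cyclic by auto
    show "distinct (segment_tail s)" using s tails by (simp add: distinct_concat_iff)
  qed
  moreover have "segment_passages s \<inter> segment_passages s' = {}"
    if "s \<in> set segs" "s' \<in> set segs" "s \<noteq> s'" for s s'
  proof -
    have "set (segment_tail s) \<inter> set (segment_tail s') = {}"
      using disjoint_of_distinct_concat[OF tails] that by (simp add: segment_tail_def)
    thus ?thesis using snd_segment_passage_in_tail by blast
  qed
  moreover have "passages H C = (\<Union>s \<in> set segs. segment_passages s)"
    unfolding passages_def segment_passages_def cyclic by blast
  ultimately show thesis
    using that[of "map fst bs" segs] bs(1) \<open>distinct (map fst bs)\<close> old_in_C heads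
      cyclic_pairs_block_heads[OF bs(1)] by (simp add: cycle_projection_def segs_def)
qed

lemma projected_cycle:
  assumes C: "is_cycle H C" and "cycle_projection C Cg segs"
  shows "is_cycle G Cg"
proof -
  note CC = is_cycle_facts[OF C]
  have Cg: "Cg \<noteq> []" "distinct Cg" "\<forall>x \<in> set Cg. Inl x \<in> set C"
    and segs: "\<forall>s \<in> set segs. cycle_segment (set C) s" "cyclic_pairs Cg = (\<lambda>(x, r, y). (x, y)) ` set segs"
    using assms(2) by (simp_all add: cycle_projection_def)
  have in_G: "set Cg \<subseteq> hedges G" using Cg(3) CC(3) by auto
  have "inj_on (opp G) (set Cg)"
  proof (rule inj_onI)
    fix h h' assume h: "h \<in> set Cg" "h' \<in> set Cg" and eq: "opp G h = opp G h'"
    have "h = opp G (opp G h)" using h in_G hedge_G by auto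
    also have "\<dots> = h'" unfolding eq using h in_G hedge_G by auto
    finally show "h = h'" .
  qed
  moreover have "set Cg \<inter> opp G ` set Cg = {}"
  proof -
    have False if "h \<in> set Cg" "h' \<in> set Cg" "h = opp G h'" for h h'
    proof -
      have "Inl h \<in> set C" "Inl h' \<in> set C" "Inl h = opp H (Inl h')" using Cg(3) that by auto
      thus False using CC(4) by blast
    qed
    thus ?thesis by blast
  qed
  moreover have "vert G (opp G (Cg ! i)) = vert G (Cg ! ((i + 1) mod length Cg))"
    if "i < length Cg" for i
  proof -
    have "(Cg ! i, Cg ! ((i + 1) mod length Cg)) \<in> cyclic_pairs Cg"
      using that by (auto simp: cyclic_pairs_def)
    then obtain r where "(Cg ! i, r, Cg ! ((i + 1) mod length Cg)) \<in> set segs" using segs(2) by auto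
    hence "cycle_segment (set C) (Cg ! i, r, Cg ! ((i + 1) mod length Cg))" using segs(1) by blast
    from cycle_segment_at_vertex(1)[OF this] show ?thesis by simp
  qed
  ultimately show ?thesis using Cg in_G by (simp add: is_cycle_def distinct_map)
qed

lemma projected_cycles_edge_disjoint:
  assumes "cycle_projection A' A segsA" "cycle_projection B' B segsB" "edge_disjoint H A' B'"
  shows "edge_disjoint G A B"
proof -
  have "Inl ` edges_of G Cg \<subseteq> edges_of H C" if "cycle_projection C Cg segs" for C Cg segs
  proof -
    have "Inl ` set Cg \<subseteq> set C" using that by (auto simp: cycle_projection_def)
    moreover have "Inl ` opp G ` set Cg = opp H ` Inl ` set Cg" by (simp add: image_image)
    ultimately show ?thesis
      unfolding edges_of_def set_append set_map image_Un using image_mono[of "Inl ` set Cg" "set C" "opp H"]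
      by blast
  qed
  hence "Inl ` (edges_of G A \<inter> edges_of G B) \<subseteq> edges_of H A' \<inter> edges_of H B'"
    using assms(1,2) by blast
  thus ?thesis using assms(3) by (auto simp: edge_disjoint_def)
qed

lemma inj_on_projected_passage:
  assumes "\<forall>s \<in> set segs. fst s \<in> hedges G" "distinct (map fst segs)"
  shows "inj_on projected_passage (set segs)"
proof (rule inj_onI)
  fix s s' assume s: "s \<in> set segs" "s' \<in> set segs" and eq: "projected_passage s = projected_passage s'"
  hence "opp G (opp G (fst s)) = opp G (opp G (fst s'))" by (simp add: projected_passage_def)
  hence "fst s = fst s'" using assms(1) hedge_G s by simp
  thus "s = s'" using assms(2) s by (simp add: distinct_map inj_on_def)
qed

lemma crossings_eq_sum_segment_crossings:
  assumes "is_cycle H A'" "is_cycle H B'" "cycle_projection A' A segsA" "cycle_projection B' B segsB"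
  shows "crossings H A' B' = (\<Sum>p \<in> set segsA \<times> set segsB. card (segment_crossings (fst p) (snd p)))"
proof -
  have "passages H A' = (\<Union>s \<in> set segsA. segment_passages s)"
    "passages H B' = (\<Union>t \<in> set segsB. segment_passages t)"
    "\<forall>s \<in> set segsA. \<forall>s' \<in> set segsA. s \<noteq> s' \<longrightarrow> segment_passages s \<inter> segment_passages s' = {}"
    "\<forall>t \<in> set segsB. \<forall>t' \<in> set segsB. t \<noteq> t' \<longrightarrow> segment_passages t \<inter> segment_passages t' = {}"
    using assms(3,4) by (simp_all add: cycle_projection_def)
  note decomposition = this
  have "{(\<alpha>, \<beta>). \<alpha> \<in> passages H A' \<and> \<beta> \<in> passages H B' \<and> passages_cross H \<alpha> \<beta>} =
      (\<Union>p \<in> set segsA \<times> set segsB. segment_crossings (fst p) (snd p))"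
    unfolding decomposition(1,2) segment_crossings_def by auto
  moreover have "segment_crossings (fst p) (snd p) \<inter> segment_crossings (fst p') (snd p') = {}"
    if p: "p \<in> set segsA \<times> set segsB" "p' \<in> set segsA \<times> set segsB" "p \<noteq> p'" for p p'
  proof (cases "fst p = fst p'")
    case True
    hence "snd p \<noteq> snd p'" using p(3) by (simp add: prod_eq_iff)
    hence "segment_passages (snd p) \<inter> segment_passages (snd p') = {}"
      using p(1,2) decomposition(4) by (simp add: mem_Times_iff)
    thus ?thesis unfolding segment_crossings_def by blast
  next
    case False
    hence "segment_passages (fst p) \<inter> segment_passages (fst p') = {}"
      using p(1,2) decomposition(3) by (simp add: mem_Times_iff)
    thus ?thesis unfolding segment_crossings_def by blast
  qed
  ultimately show ?thesis
    using is_cycle_facts(2)[OF assms(1)] is_cycle_facts(2)[OF assms(2)]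
    by (simp add: crossings_eq_card_crossing_passages card_UN_disjoint finite_segment_crossings)
qed

lemma crossings_projected_cycles:
  assumes A': "is_cycle H A'" and B': "is_cycle H B'"
    and "cycle_projection A' A segsA" "cycle_projection B' B segsB"
  shows "crossings G A B = card {p \<in> set segsA \<times> set segsB.
    passages_cross G (projected_passage (fst p)) (projected_passage (snd p))}"
proof -
  have projection: "passages G Cg = projected_passage ` set segs" "distinct Cg"
    "inj_on projected_passage (set segs)"
    if C: "is_cycle H C" and P: "cycle_projection C Cg segs" for C Cg segs
  proof -
    have segs: "cyclic_pairs Cg = (\<lambda>(x, r, y). (x, y)) ` set segs" "map fst segs = Cg"
      "\<forall>s \<in> set segs. cycle_segment (set C) s"
      using P by (simp_all add: cycle_projection_def)
    show "distinct Cg" using P by (simp add: cycle_projection_def)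
    show "passages G Cg = projected_passage ` set segs"
      unfolding passages_def segs(1) image_image by (simp add: projected_passage_def case_prod_beta)
    have "fst s \<in> hedges G" if "s \<in> set segs" for s
      using segs(3) that cycle_segment_members(4)[OF is_cycle_facts(3)[OF C], of "fst s" "fst (snd s)" "snd (snd s)"]
      by simp
    thus "inj_on projected_passage (set segs)"
      using inj_on_projected_passage segs(2) \<open>distinct Cg\<close> by blast
  qed
  have "crossings G A B = card {(s, t). s \<in> set segsA \<and> t \<in> set segsB \<and>
      passages_cross G (projected_passage s) (projected_passage t)}"
    unfolding crossings_eq_card_crossing_passages[OF projection(2)[OF A' assms(3)] projection(2)[OF B' assms(4)]]
      projection(1)[OF A' assms(3)] projection(1)[OF B' assms(4)]
    by (rule card_related_pairs_image[OF projection(3)[OF A' assms(3)] projection(3)[OF B' assms(4)], symmetric])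
      simp
  also have "\<dots> = card {p \<in> set segsA \<times> set segsB.
      passages_cross G (projected_passage (fst p)) (projected_passage (snd p))}"
    by (rule arg_cong[of _ _ card]) auto
  finally show ?thesis .
qed

lemma vassiliev_obstruct_projects:
  assumes A': "is_cycle H A'" and B': "is_cycle H B'"
    and disjoint: "edge_disjoint H A' B'" and one: "crossings H A' B' = 1"
  shows "has_vassiliev_obstruct G"
proof -
  note CA = is_cycle_facts[OF A'] and CB = is_cycle_facts[OF B']
  have old: "\<exists>u \<in> set A'. isl u" "\<exists>u \<in> set B'. isl u"
    using crossings_triangle_cycle[OF A' B'] one by auto
  obtain A segsA where PA: "cycle_projection A' A segsA"
    by (rule cycle_segment_decomposition[OF A' old(1)])
  obtain B segsB where PB: "cycle_projection B' B segsB"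
    by (rule cycle_segment_decomposition[OF B' old(2)])
  have half_edges: "(set A' \<union> opp H ` set A') \<inter> (set B' \<union> opp H ` set B') = {}"
    using disjoint by (simp add: edge_disjoint_def edges_of_def)
  have "crossings G A B = card {p \<in> set segsA \<times> set segsB.
      passages_cross G (projected_passage (fst p)) (projected_passage (snd p))}"
    using crossings_projected_cycles[OF A' B' PA PB] .
  also have "\<dots> = 1"
  proof (rule card_odd_terms_of_sum_1)
    show "(\<Sum>p \<in> set segsA \<times> set segsB. card (segment_crossings (fst p) (snd p))) = 1"
      using crossings_eq_sum_segment_crossings[OF A' B' PA PB] one by simp
    fix p assume p: "p \<in> set segsA \<times> set segsB"
    have "cycle_segment (set A') (fst p)" "cycle_segment (set B') (snd p)"
      using PA PB p by (simp_all add: cycle_projection_def mem_Times_iff)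
    thus "passages_cross G (projected_passage (fst p)) (projected_passage (snd p)) \<longleftrightarrow>
        odd (card (segment_crossings (fst p) (snd p)))"
      by (rule segment_crossings_parity[OF CA(3) CB(3) CA(4) CB(4) half_edges])
  qed simp
  finally show ?thesis
    using projected_cycle[OF A' PA] projected_cycle[OF B' PB]
      projected_cycles_edge_disjoint[OF PA PB disjoint] by (auto simp: has_vassiliev_obstruct_def)
qed

end

theorem lemma3p2:
  fixes G :: "('v, 'h) sgraph"
    and G' :: "('v \<times> nat, 'h + 'v \<times> nat \<times> nat) sgraph"
  assumes "star_graph G"
    and "\<forall>a \<in> verts G. valency G a = 4 \<or> valency G a = 6"
    and "is_expansion G G'"
    and "has_vassiliev_obstruct G'"
  shows "has_vassiliev_obstruct G"
proof -
  obtain lab where lab: "lab_ok G lab" "G' = expand G lab" using assms(3) by (auto simp: is_expansion_def)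
  interpret expansion G lab using assms(1,2) lab(1) by unfold_locales
  show ?thesis using assms(4) vassiliev_obstruct_projects
    by (auto simp: lab(2) has_vassiliev_obstruct_def)
qed

end
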